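(* Let $A_1,\dots,A_m\in\mathrm{Pos}(\mathcal X)$ and $\alpha_1,\dots,\alpha_m\in\mathbb R\cup\{-\infty\}$, and let $\ell:\mathrm{Herm}(\mathcal X)\to\overline{\mathbb R}$ be extended linear with $\ell(\rho)=\sum_{i=1}^m\langle A_i,\rho\rangle\alpha_i$ for all $\rho\in\mathrm{Dens}(\mathcal X)$. Then there exists an extended Hermitian matrix $E=A-\infty B\in\overline{\mathrm{Herm}}(\mathcal X)$ such that $\ell(\rho)=\langle E,\rho\rangle$ for all $\rho\in\mathrm{Dens}(\mathcal X)$.
   Context: $\mathcal X=\mathbb C^n$; $\mathrm{Herm}(\mathcal X)$ Hermitian matrices, $\langle X,Y\rangle=\mathrm{Tr}(X^*Y)$; $\mathrm{Pos}(\mathcal X)$ positive semidefinite; $\mathrm{Dens}(\mathcal X)$ density matrices. $\overline{\mathbb R}=\mathbb R\cup\{\pm\infty\}$ with $0\cdot(-\infty)=0$ and $c\cdot(-\infty)=-\infty$ for $c>0$. An extended linear function $\ell$ satisfies $\ell(\alpha v)=\alpha\ell(v)$ for real $\alpha$ and $\ell(v+v')=\ell(v)+\ell(v')$ whenever $\{\ell(v),\ell(v')\}\ne\{\infty,-\infty\}$. $\overline{\mathrm{Herm}}(\mathcal X)$ is the set of formal expressions $A-\infty B$ with $A\in\mathrm{Herm}(\mathcal X)$, $B\in\mathrm{Pos}(\mathcal X)$, $AB=0$, acting by $\langle A-\infty B,X\rangle=\langle A,X\rangle-\infty\langle B,X\rangle$. *)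

theory Defs
  imports "HOL-Analysis.Analysis" "HOL-Library.Extended_Real"
begin

definition cadj :: "complex^'n^'n \<Rightarrow> complex^'n^'n" where
  "cadj X = (\<chi> i j. cnj (X $ j $ i))"

definition ctrace :: "complex^'n::finite^'n \<Rightarrow> complex" where
  "ctrace X = (\<Sum>i\<in>UNIV. X $ i $ i)"

text \<open>Inner product <X,Y> = Tr(X^* Y), real-valued on Hermitian matrices (we take the real part).\<close>
definition hip :: "complex^'n::finite^'n \<Rightarrow> complex^'n^'n \<Rightarrow> real" where
  "hip X Y = Re (ctrace (cadj X ** Y))"

definition is_herm :: "complex^'n^'n \<Rightarrow> bool" where
  "is_herm X \<longleftrightarrow> cadj X = X"

definition is_pos :: "complex^'n::finite^'n \<Rightarrow> bool" where
  "is_pos X \<longleftrightarrow> is_herm X \<and> (\<forall>v::complex^'n. 0 \<le> Re (\<Sum>i\<in>UNIV. cnj (v $ i) * (X *v v) $ i))"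

definition is_dens :: "complex^'n::finite^'n \<Rightarrow> bool" where
  "is_dens X \<longleftrightarrow> is_pos X \<and> ctrace X = 1"

text \<open>Extended linear function on Herm(X) with values in ereal
  (ereal already satisfies 0 * -inf = 0 and c * -inf = -inf for c > 0).\<close>
definition ext_linear :: "(complex^'n::finite^'n \<Rightarrow> ereal) \<Rightarrow> bool" where
  "ext_linear l \<longleftrightarrow>
     (\<forall>a::real. \<forall>v. is_herm v \<longrightarrow> l (a *\<^sub>R v) = ereal a * l v) \<and>
     (\<forall>v w. is_herm v \<longrightarrow> is_herm w \<longrightarrow> {l v, l w} \<noteq> {\<infinity>, -\<infinity>} \<longrightarrow>
        l (v + w) = l v + l w)"

text \<open>Extended Hermitian matrix A - inf B, given by the pair (A,B).\<close>
definition is_ext_herm :: "complex^'n::finite^'n \<Rightarrow> complex^'n^'n \<Rightarrow> bool" where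
  "is_ext_herm A B \<longleftrightarrow> is_herm A \<and> is_pos B \<and> A ** B = 0"

definition ext_hip :: "complex^'n::finite^'n \<Rightarrow> complex^'n^'n \<Rightarrow> complex^'n^'n \<Rightarrow> ereal" where
  "ext_hip A B X = ereal (hip A X) - \<infinity> * ereal (hip B X)"

end

theory Submission
  imports Defs
begin

text \<open>
Split the indices into those with \<open>\<alpha>\<^sub>i = -\<infinity>\<close> and the rest, and put
\<open>P = \<Sum>\<^sub>{\<alpha>\<^sub>i=-\<infinity>} A\<^sub>i\<close> and \<open>X = \<Sum>\<^sub>{\<alpha>\<^sub>i>-\<infinity>} \<alpha>\<^sub>i A\<^sub>i\<close>. Since all
\<open>\<langle>A\<^sub>i,\<rho>\<rangle> \<ge> 0\<close> on densities, \<open>\<ell>(\<rho>) = \<langle>X,\<rho>\<rangle> - \<infinity>\<langle>P,\<rho>\<rangle>\<close>; only the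
condition \<open>XP = 0\<close> is missing. Let \<open>Q\<close> be the orthogonal projection onto the
kernel of \<open>P\<close>. Then \<open>A = QXQ\<close> satisfies \<open>AP = 0\<close>, and whenever \<open>\<langle>P,\<rho>\<rangle> = 0\<close>
the range of \<open>\<rho>\<close> lies in that kernel, so \<open>\<langle>A,\<rho>\<rangle> = \<langle>X,\<rho>\<rangle>\<close>; when
\<open>\<langle>P,\<rho>\<rangle> > 0\<close> both sides are \<open>-\<infinity>\<close>. Positive matrices are handled through
their decompositions \<open>\<Sum>\<^sub>k w\<^sub>k w\<^sub>k\<^sup>*\<close> into rank-one matrices. Only the
values of \<open>\<ell>\<close> on densities enter.
\<close>

definition cdot :: "complex^'n::finite \<Rightarrow> complex^'n \<Rightarrow> complex" where
  "cdot u w = (\<Sum>i\<in>UNIV. cnj (u$i) * w$i)"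

definition outer :: "complex^'n \<Rightarrow> complex^'n \<Rightarrow> complex^'n^'n" where
  "outer u w = (\<chi> i j. u$i * cnj (w$j))"

lemma cdot_add_left: "cdot (a + b) w = cdot a w + cdot b w"
  by (simp add: cdot_def sum.distrib distrib_right)

lemma cdot_diff_left: "cdot (a - b) w = cdot a w - cdot b w"
  by (simp add: cdot_def sum_subtractf left_diff_distrib)

lemma cdot_add_right: "cdot w (a + b) = cdot w a + cdot w b"
  by (simp add: cdot_def sum.distrib distrib_left)

lemma cdot_diff_right: "cdot w (a - b) = cdot w a - cdot w b"
  by (simp add: cdot_def sum_subtractf right_diff_distrib)

lemma cdot_zero_left [simp]: "cdot 0 w = 0"
  by (simp add: cdot_def)

lemma cdot_zero_right [simp]: "cdot w 0 = 0"
  by (simp add: cdot_def)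

lemma cdot_sum_right: "cdot w (sum f S) = (\<Sum>k\<in>S. cdot w (f k))"
  by (induction S rule: infinite_finite_induct) (simp_all add: cdot_add_right)

lemma cdot_scale_left: "cdot (c *s a) w = cnj c * cdot a w"
  by (simp add: cdot_def sum_distrib_left mult.assoc)

lemma cdot_scale_right: "cdot w (c *s a) = c * cdot w a"
  by (simp add: cdot_def sum_distrib_left mult_ac)

lemma cnj_cdot: "cnj (cdot u w) = cdot w u"
  by (simp add: cdot_def mult.commute)

lemma cdot_self_eq_Re: "cdot u u = complex_of_real (Re (cdot u u))"
proof -
  have "Im (cdot u u) = 0"
    using cnj_cdot[of u u] by (simp add: complex_eq_iff)
  then show ?thesis by (simp add: complex_eq_iff)
qed

lemma cdot_self_pos:
  assumes "u \<noteq> 0"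
  shows "0 < Re (cdot u u)"
proof -
  have norm: "Re (cdot u u) = (\<Sum>i\<in>UNIV. (cmod (u$i))\<^sup>2)"
    by (simp add: cdot_def complex_mult_cnj cmod_def power2_eq_square)
  obtain i where "u$i \<noteq> 0" using assms by (auto simp: vec_eq_iff)
  then have "0 < (cmod (u$i))\<^sup>2" by simp
  also have "\<dots> \<le> (\<Sum>i\<in>UNIV. (cmod (u$i))\<^sup>2)"
    by (rule member_le_sum) auto
  finally show ?thesis by (simp add: norm)
qed

lemma cdot_matrix_vector: "cdot u (X *v w) = cdot (cadj X *v u) w"
proof -
  have "cdot u (X *v w) = (\<Sum>i\<in>UNIV. \<Sum>j\<in>UNIV. cnj (u$i) * (X$i$j * w$j))"
    by (simp add: cdot_def matrix_vector_mult_def sum_distrib_left)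
  also have "\<dots> = (\<Sum>j\<in>UNIV. \<Sum>i\<in>UNIV. cnj (u$i) * (X$i$j * w$j))"
    by (rule sum.swap)
  also have "\<dots> = cdot (cadj X *v u) w"
    by (simp add: cdot_def cadj_def matrix_vector_mult_def sum_distrib_right sum_distrib_left
        mult.commute mult.left_commute)
  finally show ?thesis .
qed

lemma cdot_axis_left: "cdot (axis a 1) w = w$a"
proof -
  have eq: "(\<lambda>i. cnj (axis a 1 $ i) * w$i) = (\<lambda>i. if i = a then w$i else 0)"
    by (auto simp: axis_def)
  show ?thesis unfolding cdot_def eq by simp
qed

lemma matrix_vector_axis: "(X *v axis a (1::complex)) $ i = X$i$a"
proof -
  have eq: "(\<lambda>j. X$i$j * axis a 1 $ j) = (\<lambda>j. if j = a then X$i$j else 0)"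
    by (auto simp: axis_def)
  show ?thesis unfolding matrix_vector_mult_def vec_lambda_beta eq by simp
qed

lemma matrix_vector_scale: "X *v (c *s v) = c *s (X *v (v::complex^'n::finite))"
  by (auto simp: vec_eq_iff matrix_vector_mult_def sum_distrib_left mult.left_commute
      intro!: sum.cong)

lemma cdot_quadratic_expand:
  "cdot (a + t *s b) (X *v (a + t *s b)) =
     cdot a (X *v a) + t * cdot a (X *v b) + cnj t * cdot b (X *v a) + cnj t * t * cdot b (X *v b)"
  by (simp add: matrix_vector_right_distrib matrix_vector_scale cdot_add_left cdot_add_right
      cdot_scale_left cdot_scale_right algebra_simps)

lemma cadj_zero [simp]: "cadj 0 = 0"
  by (simp add: cadj_def vec_eq_iff)

lemma cadj_add: "cadj (X + Y) = cadj X + cadj Y"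
  by (simp add: cadj_def vec_eq_iff)

lemma cadj_diff: "cadj (X - Y) = cadj X - cadj Y"
  by (simp add: cadj_def vec_eq_iff)

lemma cadj_scaleR: "cadj (a *\<^sub>R X) = a *\<^sub>R cadj X"
  by (simp add: cadj_def vec_eq_iff)

lemma cadj_matrix_mult: "cadj (X ** Y) = cadj Y ** cadj X"
  by (simp add: cadj_def vec_eq_iff matrix_matrix_mult_def mult.commute)

lemma cadj_outer: "cadj (outer u w) = outer w u"
  by (simp add: cadj_def outer_def vec_eq_iff mult.commute)

lemma outer_entry: "outer u w $ i $ j = u$i * cnj (w$j)"
  by (simp add: outer_def)

lemma outer_zero_left [simp]: "outer 0 v = 0"
  by (simp add: outer_def vec_eq_iff)

lemma outer_zero_right [simp]: "outer u 0 = 0"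
  by (simp add: outer_def vec_eq_iff)

lemma outer_matrix_vector: "outer u v *v w = cdot v w *s u"
  by (simp add: outer_def cdot_def vec_eq_iff matrix_vector_mult_def sum_distrib_left mult_ac)

lemma Re_cdot_outer_self: "Re (cdot w (outer v v *v w)) = (cmod (cdot v w))\<^sup>2"
proof -
  have "cdot w (outer v v *v w) = cdot v w * cnj (cdot v w)"
    by (simp add: outer_matrix_vector cdot_scale_right cnj_cdot)
  then show ?thesis
    by (simp add: complex_mult_cnj cmod_power2)
qed

lemma matrix_mult_outer: "X ** outer u v = outer (X *v u) v"
  by (simp add: outer_def vec_eq_iff matrix_vector_mult_def matrix_matrix_mult_def
      sum_distrib_right mult.assoc)

lemma outer_matrix_mult: "outer u v ** X = outer u (cadj X *v v)"
  by (simp add: outer_def cadj_def vec_eq_iff matrix_vector_mult_def matrix_matrix_mult_def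
      sum_distrib_left mult.commute mult.left_commute)

lemma matrix_add_rdistrib: "(B + C) ** A = B ** A + C ** (A::'a::semiring_1^'n::finite^'n)"
  by (vector matrix_matrix_mult_def sum.distrib[symmetric] field_simps)

lemma matrix_diff_rdistrib: "(B - C) ** A = B ** A - C ** (A::'a::ring_1^'n::finite^'n)"
  by (vector matrix_matrix_mult_def sum_subtractf[symmetric] field_simps)

lemma matrix_mult_sum: "X ** sum f S = (\<Sum>k\<in>S. X ** f k)"
  by (induction S rule: infinite_finite_induct) (simp_all add: matrix_add_ldistrib)

lemma sum_matrix_vector: "sum f S *v (x::complex^'n::finite) = (\<Sum>k\<in>S. f k *v x)"
  by (induction S rule: infinite_finite_induct) (simp_all add: matrix_vector_mult_add_rdistrib)

lemma herm_add: "is_herm X \<Longrightarrow> is_herm Y \<Longrightarrow> is_herm (X + Y)"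
  by (simp add: is_herm_def cadj_add)

lemma herm_diff: "is_herm X \<Longrightarrow> is_herm Y \<Longrightarrow> is_herm (X - Y)"
  by (simp add: is_herm_def cadj_diff)

lemma herm_sum: "(\<And>k. k \<in> S \<Longrightarrow> is_herm (f k)) \<Longrightarrow> is_herm (sum f S)"
  by (induction S rule: infinite_finite_induct) (auto simp: is_herm_def cadj_add)

lemma herm_outer_self: "is_herm (outer u u)"
  by (simp add: is_herm_def cadj_outer)

lemma herm_cdot: "is_herm X \<Longrightarrow> cdot (X *v u) w = cdot u (X *v w)"
  by (simp add: cdot_matrix_vector is_herm_def)

lemma herm_entry: "is_herm X \<Longrightarrow> cnj (X$j$i) = X$i$j"
  unfolding is_herm_def cadj_def by (metis vec_lambda_beta)

lemma herm_conj_sandwich: "is_herm Q \<Longrightarrow> is_herm X \<Longrightarrow> is_herm (Q ** X ** Q)"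
  by (simp add: is_herm_def cadj_matrix_mult matrix_mul_assoc)

lemma pos_iff: "is_pos X \<longleftrightarrow> is_herm X \<and> (\<forall>v. 0 \<le> Re (cdot v (X *v v)))"
  by (simp add: is_pos_def cdot_def)

lemma pos_add: "is_pos X \<Longrightarrow> is_pos Y \<Longrightarrow> is_pos (X + Y)"
  by (auto simp: pos_iff herm_add matrix_vector_mult_add_rdistrib cdot_add_right)

lemma pos_sum: "(\<And>k. k \<in> S \<Longrightarrow> is_pos (f k)) \<Longrightarrow> is_pos (sum f S)"
proof (induction S rule: infinite_finite_induct)
  case (insert x F)
  then show ?case by (simp add: pos_add)
qed (simp_all add: pos_iff is_herm_def)

lemma inverse_sqrt_square:
  "0 < (c::real) \<Longrightarrow> complex_of_real (1 / sqrt c) * complex_of_real (1 / sqrt c) = 1 / complex_of_real c"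
proof -
  assume "0 < c"
  then have "1 / sqrt c * (1 / sqrt c) = 1 / c" by (simp add: field_simps)
  then show ?thesis by (metis of_real_mult of_real_divide of_real_1)
qed

lemma ctrace_add: "ctrace (X + Y) = ctrace X + ctrace Y"
  by (simp add: ctrace_def sum.distrib)

lemma ctrace_mult_outer_self: "ctrace (X ** outer w w) = cdot w (X *v w)"
  by (simp add: ctrace_def cdot_def outer_def matrix_matrix_mult_def matrix_vector_mult_def
      sum_distrib_left mult_ac)

lemma hip_zero_left [simp]: "hip 0 Z = 0"
  by (simp add: hip_def ctrace_def)

lemma hip_zero_right [simp]: "hip X 0 = 0"
  by (simp add: hip_def ctrace_def)

lemma hip_add_left: "hip (X + Y) Z = hip X Z + hip Y Z"
  by (simp add: hip_def cadj_add matrix_add_rdistrib ctrace_add)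

lemma hip_add_right: "hip X (Y + Z) = hip X Y + hip X Z"
  by (simp add: hip_def matrix_add_ldistrib ctrace_add)

lemma hip_sum_left: "hip (sum f S) Z = (\<Sum>k\<in>S. hip (f k) Z)"
  by (induction S rule: infinite_finite_induct)
    (simp_all add: hip_add_left)

lemma hip_sum_right: "hip X (sum f S) = (\<Sum>k\<in>S. hip X (f k))"
  by (induction S rule: infinite_finite_induct)
    (simp_all add: hip_add_right)

lemma hip_scaleR_left: "hip (a *\<^sub>R X) Z = a * hip X Z"
  by (simp add: hip_def cadj_scaleR ctrace_def scalar_matrix_assoc[symmetric] sum_distrib_left)

lemma hip_outer_sum:
  assumes "is_herm X"
  shows "hip X (\<Sum>k\<in>S. outer (w k) (w k)) = (\<Sum>k\<in>S. Re (cdot (w k) (X *v w k)))"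
  using assms unfolding hip_sum_right by (simp add: hip_def ctrace_mult_outer_self is_herm_def)

lemma pos_diag:
  assumes "is_pos X"
  shows "X$a$a = complex_of_real (Re (X$a$a))" and "0 \<le> Re (X$a$a)"
proof -
  have "cnj (X$a$a) = X$a$a"
    using assms herm_entry by (auto simp: pos_iff)
  then show "X$a$a = complex_of_real (Re (X$a$a))"
    by (simp add: complex_eq_iff)
  have "0 \<le> Re (cdot (axis a 1) (X *v axis a 1))"
    using assms by (simp add: pos_iff)
  then show "0 \<le> Re (X$a$a)"
    by (simp add: cdot_axis_left matrix_vector_axis)
qed

lemma pos_zero_diag_imp_column_zero:
  assumes "is_pos X" and "X$a$a = 0"
  shows "X *v axis a 1 = 0"
proof (rule ccontr)
  define e :: "complex^'a" where "e = axis a 1"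
  define y where "y = X *v e"
  define N where "N = Re (cdot y y)"
  define K where "K = Re (cdot y (X *v y))"
  define r where "r = N / (K + 1)"
  assume "X *v axis a 1 \<noteq> 0"
  then have N0: "0 < N"
    unfolding N_def y_def e_def by (rule cdot_self_pos)
  have K0: "K \<ge> 0" using assms(1) unfolding K_def pos_iff by blast
  have r0: "r > 0" using N0 K0 unfolding r_def by simp
  have "0 \<le> Re (cdot (e + (- complex_of_real r) *s y) (X *v (e + (- complex_of_real r) *s y)))"
    using assms(1) unfolding pos_iff by blast
  also have "\<dots> = - 2 * r * N + r * r * K"
  proof -
    have "cdot e (X *v e) = 0"
      using assms(2) by (simp add: e_def cdot_axis_left matrix_vector_axis)
    moreover have "cdot e (X *v y) = cdot y y"
      using assms(1) herm_cdot unfolding y_def pos_iff by metis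
    moreover have "cdot y y = complex_of_real N"
      unfolding N_def by (rule cdot_self_eq_Re)
    ultimately show ?thesis
      unfolding cdot_quadratic_expand K_def by (simp add: y_def[symmetric])
  qed
  finally have "2 * N \<le> r * K"
    using r0 by (simp add: algebra_simps)
  also have "r * K = N * (K / (K + 1))"
    unfolding r_def by simp
  also have "\<dots> < N * 1"
    using N0 K0 by (intro mult_strict_left_mono) auto
  finally show False
    using N0 by simp
qed

text \<open>The Schur complement of a positive diagonal entry: with
  \<open>u = X e\<^sub>a / \<surd>X\<^sub>a\<^sub>a\<close>, the form of \<open>X - uu\<^sup>*\<close> at \<open>v\<close> equals that of \<open>X\<close>
  at \<open>v - (\<langle>X e\<^sub>a, v\<rangle> / X\<^sub>a\<^sub>a) e\<^sub>a\<close>.\<close>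
lemma pos_diff_outer_column:
  assumes pos: "is_pos X" and c: "0 < Re (X$a$a)"
  defines "u \<equiv> complex_of_real (1 / sqrt (Re (X$a$a))) *s (X *v axis a 1)"
  shows "is_pos (X - outer u u)"
proof -
  define c where "c = Re (X$a$a)"
  define s where "s = 1 / sqrt c"
  define y where "y = X *v axis a 1"
  have h: "is_herm X" using pos by (simp add: pos_iff)
  have ss: "complex_of_real s * complex_of_real s = 1 / complex_of_real c"
    unfolding s_def c_def using c by (rule inverse_sqrt_square)
  have quad: "0 \<le> Re (cdot v ((X - outer u u) *v v))" for v
  proof -
    define z where "z = cdot y v"
    define t where "t = - (z / complex_of_real c)"
    have "cdot v ((X - outer u u) *v v) = cdot v (X *v v) - cdot u v * cdot v u"
      by (simp add: matrix_vector_mult_diff_rdistrib cdot_diff_right outer_matrix_vector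
          cdot_scale_right mult.commute)
    also have "cdot u v = complex_of_real s * z"
      unfolding u_def z_def y_def s_def c_def by (simp add: cdot_scale_left)
    also have "cdot v u = complex_of_real s * cnj z"
      unfolding u_def z_def y_def s_def c_def by (simp add: cdot_scale_right cnj_cdot)
    also have "cdot v (X *v v) - complex_of_real s * z * (complex_of_real s * cnj z) =
        cdot (v + t *s axis a 1) (X *v (v + t *s axis a 1))"
    proof -
      have "cdot v (X *v axis a 1) = cnj z" unfolding z_def y_def by (simp add: cnj_cdot)
      moreover have "cdot (axis a 1) (X *v v) = z"
        unfolding z_def y_def using herm_cdot[OF h] by simp
      moreover have "cdot (axis a 1) (X *v axis a 1) = complex_of_real c"
        using pos_diag(1)[OF pos] by (simp add: cdot_axis_left matrix_vector_axis c_def)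
      ultimately show ?thesis
        unfolding cdot_quadratic_expand using c ss by (simp add: t_def c_def field_simps)
    qed
    finally show ?thesis
      using pos by (simp add: pos_iff)
  qed
  show ?thesis
    using quad h by (simp add: pos_iff herm_diff herm_outer_self)
qed

lemma pos_split_outer:
  assumes "is_pos X"
  obtains u where "is_pos (X - outer u u)"
    and "\<And>j. (X - outer u u)$a$j = 0" and "\<And>j. (X - outer u u)$j$a = 0"
    and "\<And>i. X$i$a = 0 \<Longrightarrow> u$i = 0"
proof (cases "Re (X$a$a) = 0")
  case True
  have "X *v axis a 1 = 0"
    using assms pos_diag(1)[OF assms, of a] True by (intro pos_zero_diag_imp_column_zero) auto
  then have column: "X$j$a = 0" for j
    by (metis matrix_vector_axis zero_index)
  moreover have "X$a$j = 0" for j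
    using herm_entry[of X a j] assms column by (simp add: pos_iff)
  ultimately show ?thesis
    using that[of 0] assms by simp
next
  case False
  define c where "c = Re (X$a$a)"
  have c: "0 < c" using False pos_diag(2)[OF assms, of a] unfolding c_def by simp
  have Xaa: "X$a$a = complex_of_real c" using pos_diag(1)[OF assms] unfolding c_def .
  define u where "u = complex_of_real (1 / sqrt c) *s (X *v axis a 1)"
  have u: "u$i = complex_of_real (1 / sqrt c) * X$i$a" for i
    unfolding u_def by (simp add: matrix_vector_axis)
  have entry: "(outer u u)$i$j = X$i$a * X$a$j / complex_of_real c" for i j
    using herm_entry[of X j a] assms inverse_sqrt_square[OF c]
    by (simp add: pos_iff outer_entry u mult_ac)
  show ?thesis
  proof (rule that)
    show "is_pos (X - outer u u)"
      using pos_diff_outer_column[OF assms] c unfolding u_def c_def by simp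
    show "(X - outer u u)$a$j = 0" "(X - outer u u)$j$a = 0" for j
      using c by (simp_all add: entry Xaa)
    show "X$i$a = 0 \<Longrightarrow> u$i = 0" for i
      by (simp add: u)
  qed
qed

lemma pos_outer_decomposition_on:
  assumes "finite S" and "is_pos X" and "\<forall>i j. i \<notin> S \<or> j \<notin> S \<longrightarrow> X$i$j = 0"
  shows "\<exists>w. X = (\<Sum>k\<in>S. outer (w k) (w k))"
  using assms
proof (induction S arbitrary: X rule: finite_induct)
  case empty
  then show ?case by (auto simp: vec_eq_iff)
next
  case (insert a S)
  obtain u where pos: "is_pos (X - outer u u)"
    and row: "\<And>j. (X - outer u u)$a$j = 0" and column: "\<And>j. (X - outer u u)$j$a = 0"
    and u: "\<And>i. X$i$a = 0 \<Longrightarrow> u$i = 0"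
    using pos_split_outer[OF insert.prems(1)] by metis
  have "(X - outer u u)$i$j = 0" if "i \<notin> S \<or> j \<notin> S" for i j
  proof (cases "i = a \<or> j = a")
    case True
    then show ?thesis using row column by auto
  next
    case False
    then have "X$i$j = 0" "u$i = 0 \<or> u$j = 0"
      using that insert.prems(2) u by auto
    then show ?thesis by (auto simp: outer_entry)
  qed
  then obtain w where w: "X - outer u u = (\<Sum>k\<in>S. outer (w k) (w k))"
    using insert.IH pos by blast
  have "(\<Sum>k\<in>S. outer ((w(a:=u)) k) ((w(a:=u)) k)) = (\<Sum>k\<in>S. outer (w k) (w k))"
    using insert.hyps(2) by (intro sum.cong) auto
  then have "X = (\<Sum>k\<in>insert a S. outer ((w(a:=u)) k) ((w(a:=u)) k))"
    using insert.hyps w by (simp add: algebra_simps)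
  then show ?case by blast
qed

lemma pos_outer_decomposition:
  "is_pos (X::complex^'n::finite^'n) \<Longrightarrow> \<exists>w::'n \<Rightarrow> complex^'n. X = (\<Sum>k\<in>UNIV. outer (w k) (w k))"
  by (rule pos_outer_decomposition_on) auto

lemma idempotent_add_outer:
  assumes "is_herm R" "R ** R = R" "R *v e = 0" "cdot e e = 1"
  shows "(R + outer e e) ** (R + outer e e) = R + outer e e"
proof -
  have "R ** outer e e = 0" "outer e e ** R = 0"
    using assms(1,3) by (simp_all add: matrix_mult_outer outer_matrix_mult is_herm_def)
  moreover have "outer e e ** outer e e = outer e e"
    using assms(4) by (simp add: outer_matrix_mult cadj_outer outer_matrix_vector)
  ultimately show ?thesis
    using assms(2) by (simp add: matrix_add_ldistrib matrix_add_rdistrib)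
qed

lemma projection_onto_span_exists:
  "finite V \<Longrightarrow> \<exists>R::complex^'n::finite^'n. is_herm R \<and> R ** R = R \<and> (\<forall>v\<in>V. R *v v = v) \<and>
     (\<forall>w. (\<forall>v\<in>V. cdot v w = 0) \<longrightarrow> R *v w = 0)"
proof (induction V rule: finite_induct)
  case empty
  show ?case by (rule exI[of _ 0]) (simp add: is_herm_def)
next
  case (insert v V)
  then obtain R :: "complex^'n^'n" where hR: "is_herm R" and idem: "R ** R = R"
    and fixV: "\<forall>x\<in>V. R *v x = x" and ker: "\<forall>w. (\<forall>x\<in>V. cdot x w = 0) \<longrightarrow> R *v w = 0"
    by blast
  define u where "u = v - R *v v"
  have Ru: "R *v u = 0"
    unfolding u_def by (simp add: matrix_vector_mult_diff_distrib matrix_vector_mul_assoc idem)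
  show ?case
  proof (cases "u = 0")
    case True
    then have "R *v v = v" unfolding u_def by simp
    then show ?thesis using hR idem fixV ker by auto
  next
    case False
    define N where "N = Re (cdot u u)"
    define s where "s = 1 / sqrt N"
    define e where "e = complex_of_real s *s u"
    have N0: "0 < N" unfolding N_def using False by (rule cdot_self_pos)
    have ss: "complex_of_real s * complex_of_real s = 1 / complex_of_real N"
      unfolding s_def using N0 by (rule inverse_sqrt_square)
    have uu: "cdot u u = complex_of_real N"
      unfolding N_def by (rule cdot_self_eq_Re)
    have "cdot u v = cdot u (u + R *v v)" unfolding u_def by simp
    also have "\<dots> = cdot u u + cdot (R *v u) v" by (simp add: cdot_add_right herm_cdot[OF hR])
    finally have uv: "cdot u v = cdot u u" by (simp add: Ru)
    have e_unit: "cdot e e = 1"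
      unfolding e_def using N0 by (simp add: cdot_scale_left cdot_scale_right uu mult.assoc[symmetric] ss)
    have Re: "R *v e = 0" unfolding e_def by (simp add: matrix_vector_scale Ru)
    have R'x: "(R + outer e e) *v x = R *v x + cdot e x *s e" for x
      by (simp add: matrix_vector_mult_add_rdistrib outer_matrix_vector)
    have ex: "cdot e x = complex_of_real s * (cdot v x - cdot v (R *v x))" for x
      unfolding e_def u_def
      by (simp add: cdot_scale_left cdot_diff_left herm_cdot[OF hR] right_diff_distrib)
    have "cdot e v *s e = (complex_of_real s * complex_of_real s * complex_of_real N) *s u"
      unfolding e_def by (simp add: cdot_scale_left uv uu mult_ac)
    also have "\<dots> = u" using N0 by (simp add: ss)
    finally have "(R + outer e e) *v v = v" unfolding R'x u_def by simp
    moreover have "(R + outer e e) *v x = x" if "x \<in> V" for x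
      using fixV that by (simp add: R'x ex)
    moreover have "(R + outer e e) *v w = 0" if "\<forall>x\<in>insert v V. cdot x w = 0" for w
      using ker that by (simp add: R'x ex)
    ultimately show ?thesis
      using herm_add[OF hR herm_outer_self] idempotent_add_outer[OF hR idem Re e_unit]
      by (intro exI[of _ "R + outer e e"]) auto
  qed
qed

lemma hip_pos_nonneg:
  fixes X \<rho> :: "complex^'n::finite^'n"
  assumes "is_pos X" and "is_pos \<rho>"
  shows "0 \<le> hip X \<rho>"
proof -
  obtain w :: "'n \<Rightarrow> complex^'n" where "\<rho> = (\<Sum>k\<in>UNIV. outer (w k) (w k))"
    using pos_outer_decomposition[OF assms(2)] by blast
  then show ?thesis
    using assms(1) by (simp add: hip_outer_sum pos_iff sum_nonneg)
qed

lemma pos_kernel_projection_exists: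
  assumes "is_pos P"
  obtains Q where "is_herm Q" and "Q ** P = 0"
    and "\<And>w. Re (cdot w (P *v w)) = 0 \<Longrightarrow> Q *v w = w"
proof -
  obtain v :: "'a \<Rightarrow> complex^'a" where P: "P = (\<Sum>k\<in>UNIV. outer (v k) (v k))"
    using pos_outer_decomposition[OF assms] by blast
  obtain R :: "complex^'a^'a" where hR: "is_herm R"
    and fix_v: "\<forall>x\<in>range v. R *v x = x" and ker: "\<forall>w. (\<forall>x\<in>range v. cdot x w = 0) \<longrightarrow> R *v w = 0"
    using projection_onto_span_exists[of "range v"] by auto
  show ?thesis
  proof
    show "is_herm (mat 1 - R)"
      using hR by (simp add: is_herm_def cadj_diff) (simp add: cadj_def mat_def vec_eq_iff)
    have "R ** P = P"
      unfolding P using fix_v by (simp add: matrix_mult_sum matrix_mult_outer)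
    then show "(mat 1 - R) ** P = 0"
      by (simp add: matrix_diff_rdistrib)
    fix w assume "Re (cdot w (P *v w)) = 0"
    moreover have "Re (cdot w (P *v w)) = (\<Sum>k\<in>UNIV. (cmod (cdot (v k) w))\<^sup>2)"
      unfolding P by (simp add: sum_matrix_vector cdot_sum_right Re_sum Re_cdot_outer_self)
    ultimately have "cdot (v k) w = 0" for k
      by (simp add: sum_nonneg_eq_0_iff)
    then have "R *v w = 0" using ker by auto
    then show "(mat 1 - R) *v w = w"
      by (simp add: matrix_vector_mult_diff_rdistrib)
  qed
qed

lemma ext_hip_compression:
  fixes X P :: "complex^'n::finite^'n"
  assumes hX: "is_herm X" and posP: "is_pos P"
  obtains A where "is_ext_herm A P" and "\<And>\<rho>. is_pos \<rho> \<Longrightarrow> ext_hip A P \<rho> = ext_hip X P \<rho>"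
proof -
  obtain Q where hQ: "is_herm Q" and QP: "Q ** P = 0"
    and Q_fix: "\<And>w. Re (cdot w (P *v w)) = 0 \<Longrightarrow> Q *v w = w"
    using pos_kernel_projection_exists[OF posP] by blast
  define A where "A = Q ** X ** Q"
  have hA: "is_herm A" unfolding A_def using hQ hX by (rule herm_conj_sandwich)
  have "A ** P = 0" unfolding A_def by (simp add: matrix_mul_assoc[symmetric] QP)
  then have "is_ext_herm A P" using hA posP by (simp add: is_ext_herm_def)
  moreover have "ext_hip A P \<rho> = ext_hip X P \<rho>" if pos\<rho>: "is_pos \<rho>" for \<rho>
  proof (cases "hip P \<rho> = 0")
    case True
    obtain w :: "'n \<Rightarrow> complex^'n" where \<rho>: "\<rho> = (\<Sum>k\<in>UNIV. outer (w k) (w k))"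
      using pos_outer_decomposition[OF pos\<rho>] by blast
    have "(\<Sum>k\<in>UNIV. Re (cdot (w k) (P *v w k))) = 0"
      using True posP unfolding \<rho> by (simp add: hip_outer_sum pos_iff)
    then have "Re (cdot (w k) (P *v w k)) = 0" for k
      using posP by (simp add: sum_nonneg_eq_0_iff pos_iff)
    then have "Q *v w k = w k" for k
      by (rule Q_fix)
    then have "cdot (w k) (A *v w k) = cdot (w k) (X *v w k)" for k
      unfolding A_def by (metis matrix_vector_mul_assoc herm_cdot[OF hQ])
    then have "hip A \<rho> = hip X \<rho>"
      unfolding \<rho> by (simp add: hip_outer_sum hA hX)
    then show ?thesis by (simp add: ext_hip_def)
  next
    case False
    then have "0 < hip P \<rho>"
      using hip_pos_nonneg[OF posP pos\<rho>] by simp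
    then show ?thesis by (simp add: ext_hip_def)
  qed
  ultimately show ?thesis using that by blast
qed

lemma sum_ereal_mult_split_minf:
  fixes h :: "'a \<Rightarrow> real" and \<alpha> :: "'a \<Rightarrow> ereal"
  assumes "finite S" and "\<And>i. i \<in> S \<Longrightarrow> 0 \<le> h i" and "\<And>i. i \<in> S \<Longrightarrow> \<alpha> i \<noteq> \<infinity>"
  shows "(\<Sum>i\<in>S. ereal (h i) * \<alpha> i) =
    ereal (\<Sum>i\<in>{i\<in>S. \<alpha> i \<noteq> -\<infinity>}. real_of_ereal (\<alpha> i) * h i) - \<infinity> * ereal (\<Sum>i\<in>{i\<in>S. \<alpha> i = -\<infinity>}. h i)"
proof -
  let ?I = "{i\<in>S. \<alpha> i = -\<infinity>}" and ?J = "{i\<in>S. \<alpha> i \<noteq> -\<infinity>}"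
  have "S = ?I \<union> ?J" by auto
  then have "(\<Sum>i\<in>S. ereal (h i) * \<alpha> i) = (\<Sum>i\<in>?I \<union> ?J. ereal (h i) * \<alpha> i)"
    by simp
  also have "\<dots> = (\<Sum>i\<in>?I. ereal (h i) * \<alpha> i) + (\<Sum>i\<in>?J. ereal (h i) * \<alpha> i)"
    using assms(1) by (intro sum.union_disjoint) auto
  also have "(\<Sum>i\<in>?I. ereal (h i) * \<alpha> i) = (\<Sum>i\<in>?I. ereal (h i) * -\<infinity>)"
    by (rule sum.cong) auto
  also have "\<dots> = (\<Sum>i\<in>?I. ereal (h i)) * -\<infinity>"
    using assms(2) by (subst sum_ereal_left_distrib) auto
  also have "(\<Sum>i\<in>?J. ereal (h i) * \<alpha> i) = (\<Sum>i\<in>?J. ereal (real_of_ereal (\<alpha> i) * h i))"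
  proof (rule sum.cong)
    fix i assume "i \<in> ?J"
    then have "\<alpha> i = ereal (real_of_ereal (\<alpha> i))" using assms(3) by (auto intro: ereal_real'[symmetric])
    then show "ereal (h i) * \<alpha> i = ereal (real_of_ereal (\<alpha> i) * h i)"
      by (metis mult.commute times_ereal.simps(1))
  qed simp
  finally show ?thesis
    unfolding sum_ereal by (simp add: mult.commute add.commute minus_ereal_def)
qed

theorem lemmaA1:
  fixes m :: nat
    and As :: "nat \<Rightarrow> complex^'n::finite^'n"
    and \<alpha> :: "nat \<Rightarrow> ereal"
    and l :: "complex^'n^'n \<Rightarrow> ereal"
  assumes "\<forall>i\<in>{1..m}. is_pos (As i)"
    and "\<forall>i\<in>{1..m}. \<alpha> i \<noteq> \<infinity>"
    and "ext_linear l"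
    and "\<forall>\<rho>. is_dens \<rho> \<longrightarrow> l \<rho> = (\<Sum>i=1..m. ereal (hip (As i) \<rho>) * \<alpha> i)"
  shows "\<exists>A B. is_ext_herm A B \<and> (\<forall>\<rho>. is_dens \<rho> \<longrightarrow> l \<rho> = ext_hip A B \<rho>)"
proof -
  define P where "P = (\<Sum>i\<in>{i\<in>{1..m}. \<alpha> i = -\<infinity>}. As i)"
  define X where "X = (\<Sum>i\<in>{i\<in>{1..m}. \<alpha> i \<noteq> -\<infinity>}. real_of_ereal (\<alpha> i) *\<^sub>R As i)"
  have hX: "is_herm X"
    unfolding X_def using assms(1) by (intro herm_sum) (auto simp: pos_iff is_herm_def cadj_scaleR)
  have posP: "is_pos P"
    unfolding P_def using assms(1) by (intro pos_sum) auto
  obtain A where ext: "is_ext_herm A P"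
    and A: "\<And>\<rho>. is_pos \<rho> \<Longrightarrow> ext_hip A P \<rho> = ext_hip X P \<rho>"
    using ext_hip_compression[OF hX posP] by blast
  have "l \<rho> = ext_hip A P \<rho>" if "is_dens \<rho>" for \<rho>
  proof -
    have "l \<rho> = (\<Sum>i=1..m. ereal (hip (As i) \<rho>) * \<alpha> i)"
      using assms(4) that by blast
    also have "\<dots> = ext_hip X P \<rho>"
      using assms(1,2) that unfolding ext_hip_def P_def X_def is_dens_def
      by (subst sum_ereal_mult_split_minf) (auto simp: hip_sum_left hip_scaleR_left hip_pos_nonneg)
    finally show ?thesis using A that by (simp add: is_dens_def)
  qed
  with ext show ?thesis by blast
qed

end
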